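(* For every integer $n\ge1$, $$\mathrm{He}_{(n,n)}(0)=\begin{cases}\dfrac{(n!)^2}{2^{n-1}\left(\frac{n-1}{2}\right)!^2}, & n\text{ odd},\\[2mm] (n+1)\dfrac{(n!)^2}{2^{n}\left(\frac{n}{2}\right)!^2}, & n\text{ even}.\end{cases}$$ In particular, $\mathrm{He}_{(n,n)}(0)$ is a perfect square $r^2$ ($r\ge1$ an integer) when $n$ is odd, and is of the form $(n+1)r^2$ with $r\ge1$ an integer when $n$ is even.
   Context: $\mathrm{He}_k(x)$ denotes the monic probabilists' Hermite polynomial of degree $k$. For a partition $\lambda=(\lambda_1\ge\dots\ge\lambda_r\ge0)$ the degree sequence is $n_\lambda=(\lambda_r,\lambda_{r-1}+1,\dots,\lambda_1+r-1)$, and $\mathrm{He}_\lambda(x)=\mathrm{Wr}[\mathrm{He}_{n_1},\dots,\mathrm{He}_{n_r}]/\prod_{i<j}(n_j-n_i)$ where $n_\lambda=(n_1,\dots,n_r)$. Thus $\mathrm{He}_{(n,n)}=\mathrm{Wr}[\mathrm{He}_n,\mathrm{He}_{n+1}]$. *)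

theory Defs
  imports "HOL-Computational_Algebra.Polynomial"
begin

fun hermite_He :: "nat \<Rightarrow> real poly" where
  "hermite_He 0 = 1"
| "hermite_He (Suc 0) = [:0, 1:]"
| "hermite_He (Suc (Suc k)) = [:0, 1:] * hermite_He (Suc k) - smult (real (Suc k)) (hermite_He k)"

definition wronskian2 :: "real poly \<Rightarrow> real poly \<Rightarrow> real poly" where
  "wronskian2 p q = p * pderiv q - pderiv p * q"

text \<open>He_(n,n) = Wr[He_n, He_(n+1)] (degree sequence (n, n+1), normalising constant 1).\<close>
definition He_nn :: "nat \<Rightarrow> real poly" where
  "He_nn n = wronskian2 (hermite_He n) (hermite_He (Suc n))"

end

theory Submission imports Defs begin

text \<open>Since \<open>He_k' = k He_(k-1)\<close>, the Wronskian of consecutive Hermite polynomials is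
  \<open>(n+1) He_n\<^sup>2 - n He_(n-1) He_(n+1)\<close>. At the origin the odd polynomials vanish and
  \<open>He_(2m)(0) = (-1)\<^sup>m (2m-1)!!\<close>, so exactly one of the two terms survives: for odd
  \<open>n = 2m+1\<close> it is \<open>n (2m-1)!! (2m+1)!! = ((2m+1)!!)\<^sup>2\<close>, for even \<open>n = 2m\<close> it is
  \<open>(n+1) ((2m-1)!!)\<^sup>2\<close>; and \<open>(2m-1)!! = (2m)! / (2\<^sup>m m!)\<close>.\<close>

lemma pderiv_hermite_He: "pderiv (hermite_He (Suc k)) = smult (real (Suc k)) (hermite_He k)"
proof (induction k rule: hermite_He.induct)
  case 1
  show ?case by (simp add: pderiv_pCons)
next
  case 2
  show ?case by (simp add: pderiv_pCons pderiv_mult numeral_2_eq_2 one_pCons algebra_simps)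
next
  case (3 k)
  let ?H = hermite_He
  have "pderiv (?H (Suc (Suc (Suc k))))
      = ?H (Suc (Suc k)) + [:0, 1:] * smult (real (Suc (Suc k))) (?H (Suc k))
        - smult (real (Suc (Suc k))) (smult (real (Suc k)) (?H k))"
    by (simp only: hermite_He.simps(3)[of "Suc k"])
       (simp del: hermite_He.simps add: "3.IH" pderiv_mult pderiv_diff pderiv_smult pderiv_pCons)
  also have "\<dots> = ?H (Suc (Suc k)) + smult (real (Suc (Suc k))) (?H (Suc (Suc k)))"
    by (simp del: hermite_He.simps add: hermite_He.simps(3)[of k] smult_diff_right)
  also have "\<dots> = smult (real (Suc (Suc (Suc k)))) (?H (Suc (Suc k)))"
    by (metis add.commute of_nat_Suc smult_1_left smult_add_left)
  finally show ?case .
qed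

lemma He_nn_eq:
  "He_nn n = smult (real (n + 1)) (hermite_He n ^ 2)
             - smult (real n) (hermite_He (n - 1) * hermite_He (Suc n))"
  by (cases n)
     (simp_all del: hermite_He.simps(3)
               add: pderiv_pCons He_nn_def wronskian2_def pderiv_hermite_He
                    power2_eq_square algebra_simps)

fun odd_double_fact :: "nat \<Rightarrow> nat" where
  "odd_double_fact 0 = 1"
| "odd_double_fact (Suc m) = (2 * m + 1) * odd_double_fact m"

lemma odd_double_fact_pos: "odd_double_fact m \<ge> 1"
  by (induction m) auto

lemma odd_double_fact_eq_fact: "real (odd_double_fact m) = fact (2 * m) / (2 ^ m * fact m)"
proof (induction m)
  case 0
  show ?case by simp
next
  case (Suc m)
  have "real (odd_double_fact (Suc m)) = (2 * real m + 1) * real (odd_double_fact m)"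
    by (simp add: algebra_simps)
  also have "\<dots> = (2 * real m + 1) * (fact (2 * m) / (2 ^ m * fact m))"
    by (simp only: Suc.IH)
  also have "\<dots> = (2 * real m + 2) * ((2 * real m + 1) * fact (2 * m))
                   / ((2 * real m + 2) * (2 ^ m * fact m))"
    by simp
  also have "\<dots> = fact (2 * Suc m) / (2 ^ Suc m * fact (Suc m))"
    by (simp add: algebra_simps)
  finally show ?case .
qed

lemma poly_hermite_He_0:
  "poly (hermite_He (2 * m)) 0 = (-1) ^ m * real (odd_double_fact m)
   \<and> poly (hermite_He (2 * m + 1)) 0 = 0"
proof (induction m)
  case 0
  show ?case by simp
next
  case (Suc m)
  have "2 * Suc m = Suc (Suc (2 * m))" "2 * Suc m + 1 = Suc (Suc (2 * m + 1))"
    by simp_all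
  then show ?case
    using Suc.IH by (simp add: algebra_simps)
qed

lemma poly_He_nn_odd_0:
  "poly (He_nn (2 * m + 1)) 0 = real (odd_double_fact (Suc m) ^ 2)"
proof -
  let ?d = "\<lambda>m. real (odd_double_fact m)"
  have "hermite_He (Suc (2 * m + 1)) = hermite_He (2 * Suc m)"
    by simp
  then have "poly (He_nn (2 * m + 1)) 0 = real (2 * m + 1) * ?d m * ?d (Suc m) * ((-1) ^ m * (-1) ^ m)"
    using poly_hermite_He_0[of m] poly_hermite_He_0[of "Suc m"]
    by (simp del: hermite_He.simps odd_double_fact.simps add: He_nn_eq algebra_simps)
  also have "\<dots> = ?d (Suc m) * ?d (Suc m)"
    by (simp flip: power_add add: algebra_simps)
  finally show ?thesis
    by (simp add: power2_eq_square)
qed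

lemma poly_He_nn_even_0:
  "poly (He_nn (2 * m)) 0 = real ((2 * m + 1) * odd_double_fact m ^ 2)"
  using poly_hermite_He_0[of m]
  by (simp del: hermite_He.simps add: He_nn_eq power_mult_distrib algebra_simps flip: power_mult)

theorem mainTheorem12:
  fixes n :: nat
  assumes "n \<ge> 1"
  shows "poly (He_nn n) 0 =
           (if odd n
            then (fact n)^2 / (2 ^ (n - 1) * (fact ((n - 1) div 2))^2)
            else real (n + 1) * (fact n)^2 / (2 ^ n * (fact (n div 2))^2))
         \<and> (odd n \<longrightarrow> (\<exists>r::nat. r \<ge> 1 \<and> poly (He_nn n) 0 = real (r^2)))
         \<and> (even n \<longrightarrow> (\<exists>r::nat. r \<ge> 1 \<and> poly (He_nn n) 0 = real ((n + 1) * r^2)))"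
proof (cases "odd n")
  case True
  then obtain m where n: "n = 2 * m + 1"
    using oddE by blast
  have "poly (He_nn n) 0 = real (odd_double_fact (Suc m)) ^ 2"
    by (simp only: n poly_He_nn_odd_0 of_nat_power)
  also have "\<dots> = (fact n / (2 ^ m * fact m)) ^ 2"
    using odd_double_fact_eq_fact[of m] by (simp add: n algebra_simps add_divide_distrib)
  also have "\<dots> = (fact n)^2 / (2 ^ (n - 1) * (fact ((n - 1) div 2))^2)"
    by (simp add: n power_divide power_mult_distrib power_mult mult.commute)
  finally have "poly (He_nn n) 0 = (fact n)^2 / (2 ^ (n - 1) * (fact ((n - 1) div 2))^2)" .
  then show ?thesis
    using True n poly_He_nn_odd_0 odd_double_fact_pos by metis
next
  case False
  then obtain m where n: "n = 2 * m"
    using evenE by blast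
  have "poly (He_nn n) 0 = real (n + 1) * real (odd_double_fact m) ^ 2"
    by (simp only: n poly_He_nn_even_0 of_nat_mult of_nat_power)
  also have "\<dots> = real (n + 1) * (fact n)^2 / (2 ^ n * (fact (n div 2))^2)"
    by (simp add: n odd_double_fact_eq_fact power_divide power_mult_distrib power_mult mult.commute)
  finally have "poly (He_nn n) 0 = real (n + 1) * (fact n)^2 / (2 ^ n * (fact (n div 2))^2)" .
  then show ?thesis
    using False n poly_He_nn_even_0 odd_double_fact_pos by metis
qed

end
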